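(* Let $f_1,\dots,f_n$ be convex and differentiable with $\|\nabla f_i(x)-\nabla f_i(y)\|\le L\|x-y\|$, $f=\frac1n\sum_if_i$. Fix $x,\tilde x\in\mathbb{R}^d$, integers $N,B\ge1$, $b\ge2$ and $\lambda\in(0,1]$. For each worker $i=1,\dots,N$ draw $B$ indices independently and uniformly from $\{1,\dots,n\}$ (independently across workers), forming $I^i$, let $u^i=\frac1B\sum_{a\in I^i}[\nabla f_a(x)-\nabla f_a(\tilde x)]$, $\delta^i=\frac{\lambda\|u^i\|_\infty}{2^{b-1}-1}$, and $v=\frac1N\sum_{i=1}^NQ_{(\delta^i,b)}(u^i)+\nabla f(\tilde x)$ (quantization roundings independent given the indices). Let $d_\lambda\ge0$ be such that almost surely, for each $i$, the number of coordinates of $u^i$ outside $[-2^{b-1}\delta^i,(2^{b-1}-1)\delta^i]$ is at most $d_\lambda$. Let $\zeta=\frac{d\lambda^2}{4(2^{b-1}-1)^2}+d_\lambda(1-\lambda)^2+\frac{1}{NB}$. Then $$\mathbf{E}\|v-\nabla f(x)\|^2\le 4L\zeta\,\big[f(\tilde x)-f(x)-\langle\nabla f(x),\tilde x-x\rangle\big].$$ Moreover, if $J$ is a further multiset of $B$ indices drawn independently and uniformly from $\{1,\dots,n\}$, independently of everything else, and $\hat v=\frac1B\sum_{j\in J}[\nabla f_j(x)-\nabla f_j(\tilde x)]+\nabla f(\tilde x)$, then $$\mathbf{E}\|\hat v-v\|^2\le 4L\Big[\frac{1}{2B}+\frac{d\lambda^2}{4(2^{b-1}-1)^2}+d_\lambda(1-\lambda)^2+\frac{1}{NB}\Big]\big[f(\tilde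 x)-f(x)-\langle\nabla f(x),\tilde x-x\rangle\big].$$
   Context: Quantization: for an integer $b\ge2$ and $\delta>0$, $\mathrm{dom}(\delta,b)=\{k\delta:k\in\mathbb{Z},-2^{b-1}\le k\le 2^{b-1}-1\}$; the scalar quantizer $Q_{(\delta,b)}(y)$, for $y\in[-2^{b-1}\delta,(2^{b-1}-1)\delta]$ with $z$ the largest grid point $\le y$, equals $z$ with probability $\frac{z+\delta-y}{\delta}$ and $z+\delta$ otherwise; for $y$ outside this interval it equals the nearest grid point. On vectors it acts coordinatewise with independent randomness; if $\delta=0$ (only when the vector is $0$) the output is $0$. $\|\cdot\|_\infty$ is the max norm. *)

theory Defs
  imports "HOL-Analysis.Analysis" "HOL-Probability.Probability"
begin

definition linf_norm :: "real^'d \<Rightarrow> real" where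
  "linf_norm u = Max (range (\<lambda>j. \<bar>u $ j\<bar>))"

definition quant_scalar :: "real \<Rightarrow> nat \<Rightarrow> real \<Rightarrow> real pmf" where
  "quant_scalar \<delta> b y =
     (if \<delta> = 0 then return_pmf 0
      else if y < - (2 ^ (b - 1)) * \<delta> then return_pmf (- (2 ^ (b - 1)) * \<delta>)
      else if y > (2 ^ (b - 1) - 1) * \<delta> then return_pmf ((2 ^ (b - 1) - 1) * \<delta>)
      else (let z = \<delta> * of_int \<lfloor>y / \<delta>\<rfloor> in
            map_pmf (\<lambda>c. if c then z else z + \<delta>) (bernoulli_pmf ((z + \<delta> - y) / \<delta>))))"

definition quant_vec :: "real \<Rightarrow> nat \<Rightarrow> real^'d \<Rightarrow> (real^'d) pmf" where
  "quant_vec \<delta> b u = map_pmf (\<lambda>q. \<chi> j. q j) (Pi_pmf UNIV 0 (\<lambda>j. quant_scalar \<delta> b (u $ j)))"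

definition idx_pmf :: "nat \<Rightarrow> nat \<Rightarrow> nat \<Rightarrow> (nat \<times> nat \<Rightarrow> nat) pmf" where
  "idx_pmf n N B = Pi_pmf ({..<N} \<times> {..<B}) 0 (\<lambda>_. pmf_of_set {..<n})"

definition batch_pmf :: "nat \<Rightarrow> nat \<Rightarrow> (nat \<Rightarrow> nat) pmf" where
  "batch_pmf n B = Pi_pmf {..<B} 0 (\<lambda>_. pmf_of_set {..<n})"

definition worker_u :: "(nat \<Rightarrow> real^'d \<Rightarrow> real^'d) \<Rightarrow> nat \<Rightarrow> real^'d \<Rightarrow> real^'d
    \<Rightarrow> (nat \<times> nat \<Rightarrow> nat) \<Rightarrow> nat \<Rightarrow> real^'d" where
  "worker_u g B x xt I i = (1 / real B) *\<^sub>R (\<Sum>a<B. g (I (i, a)) x - g (I (i, a)) xt)"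

definition worker_delta :: "real \<Rightarrow> nat \<Rightarrow> real^'d \<Rightarrow> real" where
  "worker_delta lam b u = lam * linf_norm u / (2 ^ (b - 1) - 1)"

definition v_pmf :: "(nat \<Rightarrow> real^'d \<Rightarrow> real^'d) \<Rightarrow> nat \<Rightarrow> nat \<Rightarrow> nat \<Rightarrow> nat \<Rightarrow> real
    \<Rightarrow> real^'d \<Rightarrow> real^'d \<Rightarrow> (real^'d) pmf" where
  "v_pmf g n N B b lam x xt =
     bind_pmf (idx_pmf n N B) (\<lambda>I.
       map_pmf (\<lambda>q. (1 / real N) *\<^sub>R (\<Sum>i<N. q i) + (1 / real n) *\<^sub>R (\<Sum>a<n. g a xt))
         (Pi_pmf {..<N} 0 (\<lambda>i. quant_vec (worker_delta lam b (worker_u g B x xt I i)) b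
                                          (worker_u g B x xt I i))))"

definition vhat :: "(nat \<Rightarrow> real^'d \<Rightarrow> real^'d) \<Rightarrow> nat \<Rightarrow> nat \<Rightarrow> real^'d \<Rightarrow> real^'d
    \<Rightarrow> (nat \<Rightarrow> nat) \<Rightarrow> real^'d" where
  "vhat g n B x xt J = (1 / real B) *\<^sub>R (\<Sum>a<B. g (J a) x - g (J a) xt)
                       + (1 / real n) *\<^sub>R (\<Sum>a<n. g a xt)"

end

theory Submission
  imports Defs
begin

text \<open>
  Write \<open>\<Delta>\<^sub>a = \<nabla>f\<^sub>a(x) - \<nabla>f\<^sub>a(xt)\<close> and \<open>S\<close> for the mean of \<open>\<parallel>\<Delta>\<^sub>a\<parallel>\<^sup>2\<close>. Co-coercivity of the
  gradient of a convex \<open>L\<close>-smooth function gives \<open>S \<le> 2 L D\<close> with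
  \<open>D = f(xt) - f(x) - \<langle>\<nabla>f(x), xt - x\<rangle>\<close>. The error \<open>v - \<nabla>f(x)\<close> is the average quantization
  error plus the deviation of an average of \<open>N B\<close> independent uniform samples of \<open>\<Delta>\<close> from its
  mean, so its second moment is at most twice the sum of theirs. A rounded coordinate contributes
  at most \<open>\<delta>\<^sup>2/4\<close>, each of the at most \<open>d\<^sub>\<lambda>\<close> clipped ones at most \<open>((1 - \<lambda>) \<parallel>u\<parallel>\<^sub>\<infinity>)\<^sup>2\<close>, and
  the sampling deviation has second moment at most \<open>S / (N B)\<close>. Since \<open>v\<^sup>^\<close> is an unbiased
  estimate of \<open>\<nabla>f(x)\<close> independent of \<open>v\<close>, the bias-variance decomposition adds its variance,
  at most \<open>S / B\<close>.
\<close>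

section \<open>Smooth convex functions\<close>

lemma has_real_derivative_along_line:
  fixes f :: "'v::real_inner \<Rightarrow> real"
  assumes grad: "\<And>y. (f has_derivative (\<lambda>h. g y \<bullet> h)) (at y)"
  shows "((\<lambda>t. f (y + t *\<^sub>R w)) has_real_derivative (g (y + t *\<^sub>R w) \<bullet> w)) (at t)"
proof -
  have line: "((\<lambda>t. y + t *\<^sub>R w) has_derivative (\<lambda>s. s *\<^sub>R w)) (at t)"
    by (auto intro!: derivative_eq_intros)
  have "((\<lambda>t. f (y + t *\<^sub>R w)) has_derivative (\<lambda>s. g (y + t *\<^sub>R w) \<bullet> (s *\<^sub>R w))) (at t)"
    using has_derivative_compose[OF line grad] by (simp add: o_def)
  moreover have "(\<lambda>s. g (y + t *\<^sub>R w) \<bullet> (s *\<^sub>R w)) = (*) (g (y + t *\<^sub>R w) \<bullet> w)"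
    by (auto simp: mult.commute)
  ultimately show ?thesis by (simp add: has_field_derivative_def)
qed

lemma convex_on_gradient_inequality:
  fixes f :: "'v::real_inner \<Rightarrow> real"
  assumes cvx: "convex_on UNIV f"
    and grad: "\<And>y. (f has_derivative (\<lambda>h. g y \<bullet> h)) (at y)"
  shows "f y + g y \<bullet> (z - y) \<le> f z"
proof -
  define h where "h = (\<lambda>t::real. f (y + t *\<^sub>R (z - y)))"
  have cvx_h: "convex_on UNIV h"
  proof (rule convex_onI)
    fix t s1 s2 :: real assume t: "0 < t" "t < 1"
    have "h ((1 - t) *\<^sub>R s1 + t *\<^sub>R s2)
        = f ((1 - t) *\<^sub>R (y + s1 *\<^sub>R (z - y)) + t *\<^sub>R (y + s2 *\<^sub>R (z - y)))"
      unfolding h_def by (simp add: algebra_simps)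
    also have "\<dots> \<le> (1 - t) * h s1 + t * h s2"
      using convex_onD[OF cvx, of t] t by (simp add: h_def)
    finally show "h ((1 - t) *\<^sub>R s1 + t *\<^sub>R s2) \<le> (1 - t) * h s1 + t * h s2" .
  qed simp
  have "(h has_field_derivative (g y \<bullet> (z - y))) (at 0 within UNIV)"
    using has_real_derivative_along_line[OF grad, of y "z - y" 0] by (simp add: h_def)
  then have "(g y \<bullet> (z - y)) * (1 - 0) \<le> h 1 - h 0"
    by (intro convex_on_imp_above_tangent[OF cvx_h]) auto
  then show ?thesis by (simp add: h_def)
qed

lemma lipschitz_gradient_upper_bound:
  fixes f :: "'v::real_inner \<Rightarrow> real"
  assumes grad: "\<And>y. (f has_derivative (\<lambda>h. g y \<bullet> h)) (at y)"
    and lip: "\<And>y z. norm (g y - g z) \<le> L * norm (y - z)"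
  shows "f z \<le> f y + g y \<bullet> (z - y) + L / 2 * (norm (z - y))\<^sup>2"
proof -
  define w where "w = z - y"
  define h where "h = (\<lambda>t. f (y + t *\<^sub>R w) - t * (g y \<bullet> w) - t\<^sup>2 * (L / 2 * (norm w)\<^sup>2))"
  have "h 1 \<le> h 0"
  proof (rule DERIV_nonpos_imp_nonincreasing[of 0 1 h])
    fix t :: real assume t: "0 \<le> t" "t \<le> 1"
    have D: "(h has_real_derivative
        (g (y + t *\<^sub>R w) \<bullet> w - g y \<bullet> w - 2 * t * (L / 2 * (norm w)\<^sup>2))) (at t)"
      unfolding h_def
      by (rule derivative_eq_intros has_real_derivative_along_line[OF grad] refl | simp)+
    have "g (y + t *\<^sub>R w) \<bullet> w - g y \<bullet> w = (g (y + t *\<^sub>R w) - g y) \<bullet> w"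
      by (simp add: inner_diff_left)
    also have "\<dots> \<le> norm (g (y + t *\<^sub>R w) - g y) * norm w" by (rule norm_cauchy_schwarz)
    also have "\<dots> \<le> (L * norm (t *\<^sub>R w)) * norm w"
      using lip[of "y + t *\<^sub>R w" y] by (intro mult_right_mono) auto
    also have "\<dots> = 2 * t * (L / 2 * (norm w)\<^sup>2)" using t by (simp add: power2_eq_square)
    finally show "\<exists>d. (h has_real_derivative d) (at t) \<and> d \<le> 0" using D by auto
  qed simp
  then show ?thesis by (simp add: h_def w_def)
qed

text \<open>Evaluate the gradient inequality at \<open>x\<close> and the upper bound at \<open>xt\<close> in the point
  \<open>xt - (g xt - g x) / L\<close>.\<close>
lemma lipschitz_gradient_cocoercive:
  fixes f :: "'v::real_inner \<Rightarrow> real"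
  assumes cvx: "convex_on UNIV f"
    and grad: "\<And>y. (f has_derivative (\<lambda>h. g y \<bullet> h)) (at y)"
    and lip: "\<And>y z. norm (g y - g z) \<le> L * norm (y - z)"
  shows "(norm (g x - g xt))\<^sup>2 \<le> 2 * L * (f xt - f x - g x \<bullet> (xt - x))"
proof (cases "L \<le> 0")
  case True
  have "norm (g x - g xt) \<le> L * norm (x - xt)" by (rule lip)
  moreover have "L * norm (x - xt) \<le> 0" using True by (simp add: mult_nonpos_nonneg)
  ultimately have "norm (g x - g xt) = 0" and "L * norm (x - xt) = 0"
    using norm_ge_zero[of "g x - g xt"] by linarith+
  then show ?thesis by auto
next
  case False
  define G where "G = g xt - g x"
  define u where "u = xt - (1 / L) *\<^sub>R G"
  have "f x + g x \<bullet> (u - x) \<le> f xt + g xt \<bullet> (u - xt) + L / 2 * (norm (u - xt))\<^sup>2"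
    using convex_on_gradient_inequality[OF cvx grad, of x u]
      lipschitz_gradient_upper_bound[OF grad lip, where y = xt and z = u] by linarith
  then have "0 \<le> f xt - f x - g x \<bullet> (xt - x) + (G \<bullet> (u - xt) + L / 2 * (norm (u - xt))\<^sup>2)"
    by (simp add: G_def inner_diff_right inner_diff_left algebra_simps)
  moreover have "G \<bullet> (u - xt) + L / 2 * (norm (u - xt))\<^sup>2 = - (norm G)\<^sup>2 / (2 * L)"
    using False by (simp add: u_def dot_square_norm power2_eq_square field_simps)
  ultimately have "(norm G)\<^sup>2 / (2 * L) \<le> f xt - f x - g x \<bullet> (xt - x)" by linarith
  then show ?thesis
    using False by (simp add: G_def norm_minus_commute field_simps)
qed

section \<open>Second moments of finitely supported distributions\<close>

lemma power2_norm_add: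
  "(norm (a + b :: 'v::real_inner))\<^sup>2 = (norm a)\<^sup>2 + 2 * (a \<bullet> b) + (norm b)\<^sup>2"
  by (simp add: power2_norm_eq_inner inner_add_left inner_add_right inner_commute)

lemma power2_norm_diff:
  "(norm (a - b :: 'v::real_inner))\<^sup>2 = (norm a)\<^sup>2 - 2 * (a \<bullet> b) + (norm b)\<^sup>2"
  by (simp add: power2_norm_eq_inner inner_diff_left inner_diff_right inner_commute)

lemma power2_norm_add_le: "(norm (a + b :: 'v::real_inner))\<^sup>2 \<le> 2 * (norm a)\<^sup>2 + 2 * (norm b)\<^sup>2"
  using power2_norm_add[of a b] power2_norm_diff[of a b] zero_le_power2[of "norm (a - b)"]
  by linarith

lemma power2_norm_mean_le:
  fixes e :: "'a \<Rightarrow> 'v::real_inner"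
  shows "(norm ((1 / real (card A)) *\<^sub>R (\<Sum>i\<in>A. e i)))\<^sup>2 \<le> (1 / real (card A)) * (\<Sum>i\<in>A. (norm (e i))\<^sup>2)"
proof -
  have "(norm (\<Sum>i\<in>A. e i))\<^sup>2 = (\<Sum>j\<in>A. \<Sum>i\<in>A. e i \<bullet> e j)"
    by (simp add: power2_norm_eq_inner inner_sum_left inner_sum_right)
  also have "\<dots> \<le> (\<Sum>j\<in>A. \<Sum>i\<in>A. ((norm (e i))\<^sup>2 + (norm (e j))\<^sup>2) / 2)"
  proof (intro sum_mono)
    fix i j
    have "0 \<le> (norm (e i - e j))\<^sup>2" by simp
    then show "e i \<bullet> e j \<le> ((norm (e i))\<^sup>2 + (norm (e j))\<^sup>2) / 2"
      by (simp add: power2_norm_diff)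
  qed
  also have "\<dots> = real (card A) * (\<Sum>i\<in>A. (norm (e i))\<^sup>2)"
    by (simp add: sum.distrib add_divide_distrib sum_divide_distrib[symmetric] sum_distrib_left[symmetric])
  finally have "(norm (\<Sum>i\<in>A. e i))\<^sup>2 \<le> real (card A) * (\<Sum>i\<in>A. (norm (e i))\<^sup>2)" .
  then have "(1 / real (card A))\<^sup>2 * (norm (\<Sum>i\<in>A. e i))\<^sup>2
      \<le> (1 / real (card A))\<^sup>2 * (real (card A) * (\<Sum>i\<in>A. (norm (e i))\<^sup>2))"
    by (intro mult_left_mono) auto
  then show ?thesis
    by (cases "card A = 0") (simp_all add: power_mult_distrib power2_eq_square)
qed

lemma finite_set_pmf_Pi_pmf:
  assumes "finite A" "\<And>k. k \<in> A \<Longrightarrow> finite (set_pmf (P k))"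
  shows "finite (set_pmf (Pi_pmf A d P))"
  using assms by (simp add: set_Pi_pmf finite_PiE_dflt)

lemma expectation_bind_pmf_finite:
  fixes h :: "'b \<Rightarrow> 'c::{banach, second_countable_topology}"
  assumes "finite (set_pmf p)" "\<And>a. a \<in> set_pmf p \<Longrightarrow> finite (set_pmf (f a))"
  shows "measure_pmf.expectation (bind_pmf p f) h
       = measure_pmf.expectation p (\<lambda>a. measure_pmf.expectation (f a) h)"
  using assms
  by (simp add: pmf_expectation_bind[of "set_pmf p"] integral_measure_pmf[of "set_pmf p"])

lemma expectation_pair_pmf_finite:
  fixes h :: "'a \<times> 'b \<Rightarrow> 'c::{banach, second_countable_topology}"
  assumes "finite (set_pmf p)" "finite (set_pmf q)"
  shows "measure_pmf.expectation (pair_pmf p q) h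
       = measure_pmf.expectation p (\<lambda>a. measure_pmf.expectation q (\<lambda>b. h (a, b)))"
  unfolding pair_pmf_def using assms by (simp add: expectation_bind_pmf_finite)

lemma expectation_Pi_pmf_component:
  fixes h :: "'b \<Rightarrow> 'c::{banach, second_countable_topology}"
  assumes "finite A" "i \<in> A"
  shows "measure_pmf.expectation (Pi_pmf A d P) (\<lambda>\<omega>. h (\<omega> i)) = measure_pmf.expectation (P i) h"
proof -
  have "map_pmf (\<lambda>\<omega>. \<omega> i) (Pi_pmf A d P) = P i"
    using Pi_pmf_component[OF assms(1), of i d P] assms(2) by simp
  then show ?thesis by (metis integral_map_pmf)
qed

lemma set_pmf_of_set_lessThan: "(n::nat) \<ge> 1 \<Longrightarrow> set_pmf (pmf_of_set {..<n}) = {..<n}"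
  by (intro set_pmf_of_set) (simp_all add: lessThan_empty_iff)

lemma expectation_pmf_of_set_lessThan:
  fixes h :: "nat \<Rightarrow> 'c::{banach, second_countable_topology}"
  assumes "n \<ge> 1"
  shows "measure_pmf.expectation (pmf_of_set {..<n}) h = (1 / real n) *\<^sub>R (\<Sum>a<n. h a)"
  by (subst integral_measure_pmf[of "{..<n}"])
    (use assms in \<open>auto simp: scaleR_sum_right set_pmf_of_set_lessThan lessThan_empty_iff\<close>)

lemma expectation_mono_finite:
  fixes h k :: "'a \<Rightarrow> real"
  assumes "finite (set_pmf p)" "\<And>a. a \<in> set_pmf p \<Longrightarrow> h a \<le> k a"
  shows "measure_pmf.expectation p h \<le> measure_pmf.expectation p k"
  using assms by (intro integral_mono_AE integrable_measure_pmf_finite AE_pmfI) auto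

lemma expectation_norm_power2_diff:
  fixes h :: "'a \<Rightarrow> 'v::euclidean_space"
  assumes "finite (set_pmf p)"
  shows "measure_pmf.expectation p (\<lambda>a. (norm (h a - w))\<^sup>2)
       = measure_pmf.expectation p (\<lambda>a. (norm (h a - measure_pmf.expectation p h))\<^sup>2)
         + (norm (measure_pmf.expectation p h - w))\<^sup>2"
proof -
  define m where "m = measure_pmf.expectation p h"
  have "(norm (h a - w))\<^sup>2 = (norm (h a - m))\<^sup>2 + 2 * ((h a - m) \<bullet> (m - w)) + (norm (m - w))\<^sup>2" for a
    using power2_norm_add[of "h a - m" "m - w"] by simp
  moreover have "measure_pmf.expectation p (\<lambda>a. (h a - m) \<bullet> (m - w)) = 0"
    using assms by (simp add: m_def integrable_measure_pmf_finite inner_diff_left)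
  ultimately show ?thesis
    using assms by (simp add: m_def integrable_measure_pmf_finite)
qed

lemma expectation_norm_power2_sum_Pi_pmf:
  fixes h :: "'a \<Rightarrow> 'b \<Rightarrow> 'v::euclidean_space"
  assumes "finite A" "\<And>k. k \<in> A \<Longrightarrow> finite (set_pmf (P k))"
    and "\<And>k. k \<in> A \<Longrightarrow> measure_pmf.expectation (P k) (h k) = 0"
  shows "measure_pmf.expectation (Pi_pmf A d P) (\<lambda>\<omega>. (norm (\<Sum>k\<in>A. h k (\<omega> k)))\<^sup>2)
       = (\<Sum>k\<in>A. measure_pmf.expectation (P k) (\<lambda>y. (norm (h k y))\<^sup>2))"
  using assms
proof (induction A rule: finite_induct)
  case empty
  then show ?case by simp
next
  case (insert x F)
  let ?S = "\<lambda>\<omega>. \<Sum>k\<in>F. h k (\<omega> k)"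
  let ?E = "measure_pmf.expectation (Pi_pmf F d P)"
  have finF: "finite (set_pmf (Pi_pmf F d P))"
    using insert by (intro finite_set_pmf_Pi_pmf) auto
  have finx: "finite (set_pmf (P x))" using insert by auto
  have sum_upd: "(\<Sum>k\<in>F. h k (if k = x then y else \<omega> k)) = ?S \<omega>" for y \<omega>
    using insert.hyps by (intro sum.cong) auto
  \<comment> \<open>the cross term vanishes because \<open>h x\<close> is centred and independent of \<open>?S\<close>\<close>
  have "measure_pmf.expectation (Pi_pmf (insert x F) d P) (\<lambda>\<omega>. (norm (\<Sum>k\<in>insert x F. h k (\<omega> k)))\<^sup>2)
      = measure_pmf.expectation (P x) (\<lambda>y. ?E (\<lambda>\<omega>. (norm (h x y))\<^sup>2 + 2 * (h x y \<bullet> ?S \<omega>) + (norm (?S \<omega>))\<^sup>2))"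
    using insert.hyps finF finx
    by (simp add: Pi_pmf_insert case_prod_unfold sum_upd expectation_pair_pmf_finite power2_norm_add)
  also have "\<dots> = measure_pmf.expectation (P x) (\<lambda>y. (norm (h x y))\<^sup>2 + 2 * (h x y \<bullet> ?E ?S)
                     + ?E (\<lambda>\<omega>. (norm (?S \<omega>))\<^sup>2))"
    by (intro Bochner_Integration.integral_cong refl)
       (simp add: Bochner_Integration.integral_add integrable_measure_pmf_finite[OF finF])
  also have "\<dots> = measure_pmf.expectation (P x) (\<lambda>y. (norm (h x y))\<^sup>2)
                     + 2 * (measure_pmf.expectation (P x) (h x) \<bullet> ?E ?S) + ?E (\<lambda>\<omega>. (norm (?S \<omega>))\<^sup>2)"
    by (simp add: Bochner_Integration.integral_add integrable_measure_pmf_finite[OF finx])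
  finally show ?case using insert by simp
qed

lemma expectation_sample_mean_Pi_pmf:
  fixes h :: "'a \<Rightarrow> 'v::euclidean_space"
  assumes "finite P" "P \<noteq> {}" "finite (set_pmf U)"
  shows "measure_pmf.expectation (Pi_pmf P d (\<lambda>_. U)) (\<lambda>\<omega>. (1 / real (card P)) *\<^sub>R (\<Sum>k\<in>P. h (\<omega> k)))
       = measure_pmf.expectation U h"
proof -
  have "finite (set_pmf (Pi_pmf P d (\<lambda>_. U)))" using assms by (intro finite_set_pmf_Pi_pmf) auto
  then have "measure_pmf.expectation (Pi_pmf P d (\<lambda>_. U)) (\<lambda>\<omega>. (1 / real (card P)) *\<^sub>R (\<Sum>k\<in>P. h (\<omega> k)))
      = (1 / real (card P)) *\<^sub>R (\<Sum>k\<in>P. measure_pmf.expectation (Pi_pmf P d (\<lambda>_. U)) (\<lambda>\<omega>. h (\<omega> k)))"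
    by (simp add: Bochner_Integration.integral_sum integrable_measure_pmf_finite)
  also have "\<dots> = measure_pmf.expectation U h"
    using assms by (simp add: expectation_Pi_pmf_component sum_constant_scaleR card_gt_0_iff)
  finally show ?thesis .
qed

lemma expectation_sample_mean_deviation_le:
  fixes h :: "'a \<Rightarrow> 'v::euclidean_space"
  assumes P: "finite P" "P \<noteq> {}" and U: "finite (set_pmf U)"
  shows "measure_pmf.expectation (Pi_pmf P d (\<lambda>_. U))
           (\<lambda>\<omega>. (norm ((1 / real (card P)) *\<^sub>R (\<Sum>k\<in>P. h (\<omega> k)) - measure_pmf.expectation U h))\<^sup>2)
       \<le> measure_pmf.expectation U (\<lambda>a. (norm (h a))\<^sup>2) / real (card P)"
proof -
  define m where "m = measure_pmf.expectation U h"
  have cardP: "real (card P) > 0" using P by (simp add: card_gt_0_iff)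
  have centred: "(1 / real (card P)) *\<^sub>R (\<Sum>k\<in>P. h (\<omega> k)) - m
      = (1 / real (card P)) *\<^sub>R (\<Sum>k\<in>P. h (\<omega> k) - m)" for \<omega>
    using cardP by (simp add: sum_subtractf scaleR_diff_right sum_constant_scaleR)
  have "measure_pmf.expectation U (\<lambda>a. h a - m) = 0"
    using U by (simp add: m_def integrable_measure_pmf_finite)
  then have "measure_pmf.expectation (Pi_pmf P d (\<lambda>_. U)) (\<lambda>\<omega>. (norm (\<Sum>k\<in>P. h (\<omega> k) - m))\<^sup>2)
      = real (card P) * measure_pmf.expectation U (\<lambda>a. (norm (h a - m))\<^sup>2)"
    using expectation_norm_power2_sum_Pi_pmf[OF P(1), of "\<lambda>_. U" "\<lambda>_ a. h a - m" d] U by simp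
  moreover have "measure_pmf.expectation U (\<lambda>a. (norm (h a - m))\<^sup>2) \<le> measure_pmf.expectation U (\<lambda>a. (norm (h a))\<^sup>2)"
    using expectation_norm_power2_diff[OF U, of h 0] by (simp add: m_def)
  ultimately show ?thesis
    using cardP by (simp add: centred power_mult_distrib power2_eq_square field_simps m_def[symmetric])
qed

lemma expectation_norm_power2_sample_mean_le:
  fixes h :: "'a \<Rightarrow> 'v::euclidean_space"
  assumes P: "finite P" "e ` K \<subseteq> P" and U: "finite (set_pmf U)"
  shows "measure_pmf.expectation (Pi_pmf P d (\<lambda>_. U)) (\<lambda>\<omega>. (norm ((1 / real (card K)) *\<^sub>R (\<Sum>k\<in>K. h (\<omega> (e k)))))\<^sup>2)
       \<le> measure_pmf.expectation U (\<lambda>a. (norm (h a))\<^sup>2)"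
proof -
  have fin: "finite (set_pmf (Pi_pmf P d (\<lambda>_. U)))" using P U by (intro finite_set_pmf_Pi_pmf) auto
  have "measure_pmf.expectation (Pi_pmf P d (\<lambda>_. U)) (\<lambda>\<omega>. (norm ((1 / real (card K)) *\<^sub>R (\<Sum>k\<in>K. h (\<omega> (e k)))))\<^sup>2)
      \<le> measure_pmf.expectation (Pi_pmf P d (\<lambda>_. U)) (\<lambda>\<omega>. (1 / real (card K)) * (\<Sum>k\<in>K. (norm (h (\<omega> (e k))))\<^sup>2))"
    by (intro expectation_mono_finite fin power2_norm_mean_le)
  also have "\<dots> = (1 / real (card K)) * (\<Sum>k\<in>K. measure_pmf.expectation U (\<lambda>a. (norm (h a))\<^sup>2))"
    using P by (simp add: Bochner_Integration.integral_sum integrable_measure_pmf_finite[OF fin]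
        expectation_Pi_pmf_component[where h = "\<lambda>a. (norm (h a))\<^sup>2"] subset_iff)
  also have "\<dots> \<le> measure_pmf.expectation U (\<lambda>a. (norm (h a))\<^sup>2)"
    by (cases "card K = 0") simp_all
  finally show ?thesis .
qed

lemma expectation_norm_power2_perturbed_mean_le:
  fixes u :: "'a \<Rightarrow> 'v::euclidean_space"
  assumes A: "finite A" and P: "\<And>i. i \<in> A \<Longrightarrow> finite (set_pmf (P i))"
  shows "measure_pmf.expectation (Pi_pmf A d P) (\<lambda>q. (norm ((1 / real (card A)) *\<^sub>R (\<Sum>i\<in>A. q i - u i) + w))\<^sup>2)
       \<le> 2 * ((1 / real (card A)) * (\<Sum>i\<in>A. measure_pmf.expectation (P i) (\<lambda>y. (norm (y - u i))\<^sup>2)))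
         + 2 * (norm w)\<^sup>2"
proof -
  have fin: "finite (set_pmf (Pi_pmf A d P))" using A P by (rule finite_set_pmf_Pi_pmf)
  have "(norm ((1 / real (card A)) *\<^sub>R (\<Sum>i\<in>A. q i - u i) + w))\<^sup>2
      \<le> 2 * ((1 / real (card A)) * (\<Sum>i\<in>A. (norm (q i - u i))\<^sup>2)) + 2 * (norm w)\<^sup>2" for q
    using power2_norm_add_le[of "(1 / real (card A)) *\<^sub>R (\<Sum>i\<in>A. q i - u i)" w]
      power2_norm_mean_le[where e = "\<lambda>i. q i - u i" and A = A] by linarith
  then have "measure_pmf.expectation (Pi_pmf A d P) (\<lambda>q. (norm ((1 / real (card A)) *\<^sub>R (\<Sum>i\<in>A. q i - u i) + w))\<^sup>2)
      \<le> measure_pmf.expectation (Pi_pmf A d P)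
           (\<lambda>q. 2 * ((1 / real (card A)) * (\<Sum>i\<in>A. (norm (q i - u i))\<^sup>2)) + 2 * (norm w)\<^sup>2)"
    by (intro expectation_mono_finite fin)
  also have "\<dots> = 2 * ((1 / real (card A)) * (\<Sum>i\<in>A. measure_pmf.expectation (P i) (\<lambda>y. (norm (y - u i))\<^sup>2)))
         + 2 * (norm w)\<^sup>2"
    using A by (simp add: Bochner_Integration.integral_sum integrable_measure_pmf_finite[OF fin]
        expectation_Pi_pmf_component[where h = "\<lambda>y. (norm (y - u _))\<^sup>2"])
  finally show ?thesis .
qed

section \<open>The stochastic quantizer\<close>

lemma finite_set_pmf_quant_scalar: "finite (set_pmf (quant_scalar \<delta> b y))"
  unfolding quant_scalar_def Let_def by (auto intro: finite_subset[of _ "UNIV::bool set"])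

lemma finite_set_pmf_quant_vec: "finite (set_pmf (quant_vec \<delta> b (u::real^'d)))"
  unfolding quant_vec_def by (simp add: finite_set_pmf_Pi_pmf finite_set_pmf_quant_scalar)

text \<open>Rounding to one of the two neighbouring grid points at distance \<open>t\<close> and \<open>\<delta> - t\<close> has
  mean square error \<open>t (\<delta> - t) \<le> \<delta>\<^sup>2/4\<close>.\<close>
lemma quant_scalar_rounding_error_le:
  assumes \<delta>: "\<delta> > 0"
    and range: "- (2 ^ (b - 1)) * \<delta> \<le> y" "y \<le> (2 ^ (b - 1) - 1) * \<delta>"
  shows "measure_pmf.expectation (quant_scalar \<delta> b y) (\<lambda>q. (q - y)\<^sup>2) \<le> \<delta>\<^sup>2 / 4"
proof -
  define z where "z = \<delta> * of_int \<lfloor>y / \<delta>\<rfloor>"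
  define t where "t = y - z"
  have floor: "of_int \<lfloor>y / \<delta>\<rfloor> \<le> y / \<delta>" "y / \<delta> < of_int \<lfloor>y / \<delta>\<rfloor> + 1" by linarith+
  have t: "0 \<le> t" "t < \<delta>"
    using mult_left_mono[OF floor(1), of \<delta>] mult_strict_left_mono[OF floor(2) \<delta>] \<delta>
    by (simp_all add: t_def z_def distrib_left)
  have "measure_pmf.expectation (quant_scalar \<delta> b y) (\<lambda>q. (q - y)\<^sup>2)
      = (z - y)\<^sup>2 * ((z + \<delta> - y) / \<delta>) + (z + \<delta> - y)\<^sup>2 * (1 - (z + \<delta> - y) / \<delta>)"
    using \<delta> range t unfolding quant_scalar_def Let_def z_def[symmetric]
    by (simp add: t_def)
  also have "\<dots> = t * (\<delta> - t)"
    using \<delta> by (simp add: t_def power2_eq_square field_simps)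
  also have "\<dots> \<le> \<delta>\<^sup>2 / 4"
    using sum_squares_ge_zero[of "\<delta> - 2 * t" 0] by (simp add: power2_eq_square field_simps)
  finally show ?thesis .
qed

text \<open>Clipping moves a coordinate of modulus at most \<open>M\<close> onto the boundary of the grid, whose
  modulus is at least \<open>(2^(b-1) - 1) \<delta> = \<lambda> M\<close>.\<close>
lemma quant_scalar_error_le:
  fixes y M lam :: real
  assumes M: "M > 0" "\<bar>y\<bar> \<le> M" and lam: "0 < lam" "lam \<le> 1" and b: "b \<ge> 2"
    and \<delta>: "\<delta> = lam * M / (2 ^ (b - 1) - 1)"
  shows "measure_pmf.expectation (quant_scalar \<delta> b y) (\<lambda>q. (q - y)\<^sup>2)
     \<le> \<delta>\<^sup>2 / 4 + (if y < - (2 ^ (b - 1)) * \<delta> \<or> y > (2 ^ (b - 1) - 1) * \<delta> then ((1 - lam) * M)\<^sup>2 else 0)"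
proof -
  define K :: real where "K = 2 ^ (b - 1) - 1"
  have "(2::real) ^ 1 \<le> 2 ^ (b - 1)" using b by (intro power_increasing) auto
  then have K: "K \<ge> 1" by (simp add: K_def)
  have \<delta>K: "\<delta> = lam * M / K" by (simp add: \<delta> K_def)
  have \<delta>_pos: "\<delta> > 0" and K\<delta>: "K * \<delta> = lam * M"
    using \<delta>K M lam K by simp_all
  have two: "(2::real) ^ (b - 1) = K + 1" by (simp add: K_def)
  consider (low) "y < - (2 ^ (b - 1)) * \<delta>" | (high) "y > (2 ^ (b - 1) - 1) * \<delta>"
    | (inside) "- (2 ^ (b - 1)) * \<delta> \<le> y" "y \<le> (2 ^ (b - 1) - 1) * \<delta>"
    by linarith
  then show ?thesis
  proof cases
    case low
    have "measure_pmf.expectation (quant_scalar \<delta> b y) (\<lambda>q. (q - y)\<^sup>2) = (- (2 ^ (b - 1)) * \<delta> - y)\<^sup>2"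
      using low \<delta>_pos by (simp add: quant_scalar_def)
    also have "\<dots> \<le> ((1 - lam) * M)\<^sup>2"
      using low M K\<delta> \<delta>_pos unfolding two by (intro power_mono) (auto simp: algebra_simps)
    finally show ?thesis using low by (simp add: add_increasing)
  next
    case high
    have "0 \<le> K * \<delta>" "0 < (K + 1) * \<delta>" using K \<delta>_pos by simp_all
    then have "\<not> y < - (2 ^ (b - 1)) * \<delta>" using high unfolding two by (simp add: K_def)
    then have "measure_pmf.expectation (quant_scalar \<delta> b y) (\<lambda>q. (q - y)\<^sup>2) = (y - K * \<delta>)\<^sup>2"
      using high \<delta>_pos by (simp add: quant_scalar_def K_def power2_commute)
    also have "\<dots> \<le> ((1 - lam) * M)\<^sup>2"
      using high M K\<delta> by (intro power_mono) (auto simp: K_def algebra_simps)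
    finally show ?thesis using high by (simp add: add_increasing)
  next
    case inside
    then show ?thesis using quant_scalar_rounding_error_le[OF \<delta>_pos] by simp
  qed
qed

lemma power2_norm_vec: "(norm (x::real^'d))\<^sup>2 = (\<Sum>j\<in>UNIV. (x $ j)\<^sup>2)"
  unfolding power2_norm_eq_inner inner_vec_def by (simp add: power2_eq_square)

lemma quant_vec_error_eq_sum:
  "measure_pmf.expectation (quant_vec \<delta> b (u::real^'d)) (\<lambda>q. (norm (q - u))\<^sup>2)
     = (\<Sum>j\<in>UNIV. measure_pmf.expectation (quant_scalar \<delta> b (u $ j)) (\<lambda>y. (y - u $ j)\<^sup>2))"
proof -
  let ?Q = "Pi_pmf UNIV 0 (\<lambda>j. quant_scalar \<delta> b (u $ j))"
  have fin: "finite (set_pmf ?Q)"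
    by (intro finite_set_pmf_Pi_pmf finite_set_pmf_quant_scalar) auto
  have "measure_pmf.expectation (quant_vec \<delta> b u) (\<lambda>q. (norm (q - u))\<^sup>2)
     = measure_pmf.expectation ?Q (\<lambda>q. \<Sum>j\<in>UNIV. (q j - u $ j)\<^sup>2)"
    unfolding quant_vec_def by (simp add: power2_norm_vec)
  also have "\<dots> = (\<Sum>j\<in>UNIV. measure_pmf.expectation ?Q (\<lambda>q. (q j - u $ j)\<^sup>2))"
    by (simp add: Bochner_Integration.integral_sum integrable_measure_pmf_finite[OF fin])
  also have "\<dots> = (\<Sum>j\<in>UNIV. measure_pmf.expectation (quant_scalar \<delta> b (u $ j)) (\<lambda>y. (y - u $ j)\<^sup>2))"
    by (simp add: expectation_Pi_pmf_component[where h = "\<lambda>y. (y - u $ _)\<^sup>2"])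
  finally show ?thesis .
qed

lemma abs_component_le_linf_norm: "\<bar>u $ j\<bar> \<le> linf_norm u"
  unfolding linf_norm_def by (intro Max_ge) auto

lemma linf_norm_le_norm: "linf_norm u \<le> norm u"
proof -
  have "linf_norm u \<in> range (\<lambda>j. \<bar>u $ j\<bar>)" unfolding linf_norm_def by (intro Max_in) auto
  then show ?thesis by (auto simp: component_le_norm_cart)
qed

lemma quant_vec_error_le:
  fixes u :: "real^'d"
  assumes lam: "0 < lam" "lam \<le> 1" and b: "b \<ge> 2" and dlam: "dlam \<ge> 0"
    and clipped: "real (card {j. u $ j < - (2 ^ (b - 1)) * worker_delta lam b u
                     \<or> u $ j > (2 ^ (b - 1) - 1) * worker_delta lam b u}) \<le> dlam"
  shows "measure_pmf.expectation (quant_vec (worker_delta lam b u) b u) (\<lambda>q. (norm (q - u))\<^sup>2)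
     \<le> (real CARD('d) * lam\<^sup>2 / (4 * (2 ^ (b - 1) - 1)\<^sup>2) + dlam * (1 - lam)\<^sup>2) * (norm u)\<^sup>2"
proof -
  define M where "M = linf_norm u"
  define \<delta> where "\<delta> = worker_delta lam b u"
  define C where "C = {j. u $ j < - (2 ^ (b - 1)) * \<delta> \<or> u $ j > (2 ^ (b - 1) - 1) * \<delta>}"
  have \<delta>M: "\<delta> = lam * M / (2 ^ (b - 1) - 1)" by (simp add: \<delta>_def worker_delta_def M_def)
  have M: "\<And>j. \<bar>u $ j\<bar> \<le> M" "M \<le> norm u"
    unfolding M_def by (simp_all add: abs_component_le_linf_norm linf_norm_le_norm)
  show ?thesis
  proof (cases "M = 0")
    case True
    then have "u = 0" using M(1) by (simp add: vec_eq_iff)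
    then show ?thesis
      unfolding quant_vec_error_eq_sum by (simp add: quant_scalar_def worker_delta_def linf_norm_def)
  next
    case False
    then have M_pos: "M > 0" using M(1)[of undefined] by linarith
    have "measure_pmf.expectation (quant_vec \<delta> b u) (\<lambda>q. (norm (q - u))\<^sup>2)
        \<le> (\<Sum>j\<in>UNIV. \<delta>\<^sup>2 / 4 + (if j \<in> C then ((1 - lam) * M)\<^sup>2 else 0))"
      unfolding quant_vec_error_eq_sum C_def
      using quant_scalar_error_le[OF M_pos M(1) lam b \<delta>M] by (intro sum_mono) simp
    also have "\<dots> = real CARD('d) * (\<delta>\<^sup>2 / 4) + real (card C) * ((1 - lam) * M)\<^sup>2"
      by (simp add: sum.distrib sum.If_cases)
    also have "\<dots> \<le> real CARD('d) * (\<delta>\<^sup>2 / 4) + dlam * ((1 - lam) * M)\<^sup>2"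
      using clipped unfolding C_def \<delta>_def by (intro add_left_mono mult_right_mono) auto
    also have "\<dots> = (real CARD('d) * lam\<^sup>2 / (4 * (2 ^ (b - 1) - 1)\<^sup>2) + dlam * (1 - lam)\<^sup>2) * M\<^sup>2"
      by (simp add: \<delta>M power_divide power_mult_distrib power2_eq_square field_simps)
    also have "\<dots> \<le> (real CARD('d) * lam\<^sup>2 / (4 * (2 ^ (b - 1) - 1)\<^sup>2) + dlam * (1 - lam)\<^sup>2) * (norm u)\<^sup>2"
      using M M_pos dlam by (intro mult_left_mono power_mono) auto
    finally show ?thesis by (simp add: \<delta>_def)
  qed
qed

section \<open>Sampling and quantization error of the estimators\<close>

lemma finite_set_pmf_idx_pmf: "n \<ge> 1 \<Longrightarrow> finite (set_pmf (idx_pmf n N B))"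
  unfolding idx_pmf_def by (intro finite_set_pmf_Pi_pmf) (auto simp: set_pmf_of_set_lessThan)

lemma worker_u_mean_sq_le:
  assumes "n \<ge> 1" "i < N"
  shows "measure_pmf.expectation (idx_pmf n N B) (\<lambda>I. (norm (worker_u g B x xt I i))\<^sup>2)
       \<le> (1 / real n) * (\<Sum>a<n. (norm (g a x - g a xt))\<^sup>2)"
proof -
  define \<Delta> where "\<Delta> = (\<lambda>a. g a x - g a xt)"
  have "worker_u g B x xt I i = (1 / real (card {..<B})) *\<^sub>R (\<Sum>a<B. \<Delta> (I (Pair i a)))" for I
    by (simp add: worker_u_def \<Delta>_def)
  moreover have "Pair i ` {..<B} \<subseteq> {..<N} \<times> {..<B}" using assms by auto
  ultimately have "measure_pmf.expectation (idx_pmf n N B) (\<lambda>I. (norm (worker_u g B x xt I i))\<^sup>2)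
      \<le> measure_pmf.expectation (pmf_of_set {..<n}) (\<lambda>a. (norm (\<Delta> a))\<^sup>2)"
    using assms unfolding idx_pmf_def
    by (simp only:) (intro expectation_norm_power2_sample_mean_le, auto simp: set_pmf_of_set_lessThan)
  also have "\<dots> = (1 / real n) * (\<Sum>a<n. (norm (g a x - g a xt))\<^sup>2)"
    using assms by (simp add: expectation_pmf_of_set_lessThan \<Delta>_def)
  finally show ?thesis .
qed

text \<open>The \<open>N\<close> worker averages together form one average over the \<open>N B\<close> independent indices.\<close>
lemma worker_average_deviation_le:
  assumes "n \<ge> 1" "N \<ge> 1" "B \<ge> 1"
  shows "measure_pmf.expectation (idx_pmf n N B)
           (\<lambda>I. (norm ((1 / real N) *\<^sub>R (\<Sum>i<N. worker_u g B x xt I i)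
                       - (1 / real n) *\<^sub>R (\<Sum>a<n. g a x - g a xt)))\<^sup>2)
       \<le> (1 / real n) * (\<Sum>a<n. (norm (g a x - g a xt))\<^sup>2) / (real N * real B)"
proof -
  define \<Delta> where "\<Delta> = (\<lambda>a. g a x - g a xt)"
  define P where "P = {..<N} \<times> {..<B}"
  have P: "finite P" "P \<noteq> {}" "card P = N * B"
    using assms by (auto simp: P_def card_cartesian_product lessThan_empty_iff)
  have U: "finite (set_pmf (pmf_of_set {..<n}))"
    using assms by (simp add: set_pmf_of_set_lessThan)
  have average: "(1 / real N) *\<^sub>R (\<Sum>i<N. worker_u g B x xt I i) = (1 / real (card P)) *\<^sub>R (\<Sum>k\<in>P. \<Delta> (I k))"
    for I by (simp add: P worker_u_def \<Delta>_def P_def scaleR_sum_right sum.cartesian_product)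
  have mean: "(1 / real n) *\<^sub>R (\<Sum>a<n. \<Delta> a) = measure_pmf.expectation (pmf_of_set {..<n}) \<Delta>"
    using assms by (simp add: expectation_pmf_of_set_lessThan)
  show ?thesis
    using expectation_sample_mean_deviation_le[OF P(1,2) U, where h = \<Delta> and d = 0] average mean assms
    by (simp add: idx_pmf_def P_def[symmetric] expectation_pmf_of_set_lessThan \<Delta>_def P)
qed

lemma v_pmf_mean_sq_error_le:
  fixes g :: "nat \<Rightarrow> real^'d \<Rightarrow> real^'d"
  assumes n: "n \<ge> 1" and N: "N \<ge> 1" and B: "B \<ge> 1" and b: "b \<ge> 2"
    and lam: "0 < lam" "lam \<le> 1" and dlam_nonneg: "dlam \<ge> 0"
    and dlam: "\<And>I i. I \<in> set_pmf (idx_pmf n N B) \<Longrightarrow> i < N \<Longrightarrow>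
        real (card {j. worker_u g B x xt I i $ j
                         < - (2 ^ (b - 1)) * worker_delta lam b (worker_u g B x xt I i)
                     \<or> worker_u g B x xt I i $ j
                         > (2 ^ (b - 1) - 1) * worker_delta lam b (worker_u g B x xt I i)}) \<le> dlam"
  shows "measure_pmf.expectation (v_pmf g n N B b lam x xt) (\<lambda>v. (norm (v - (1 / real n) *\<^sub>R (\<Sum>a<n. g a x)))\<^sup>2)
       \<le> 2 * (real CARD('d) * lam\<^sup>2 / (4 * (2 ^ (b - 1) - 1)\<^sup>2) + dlam * (1 - lam)\<^sup>2
              + 1 / (real N * real B)) * ((1 / real n) * (\<Sum>a<n. (norm (g a x - g a xt))\<^sup>2))"
proof -
  define c where "c = real CARD('d) * lam\<^sup>2 / (4 * (2 ^ (b - 1) - 1)\<^sup>2) + dlam * (1 - lam)\<^sup>2"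
  define S where "S = (1 / real n) * (\<Sum>a<n. (norm (g a x - g a xt))\<^sup>2)"
  define gradF where "gradF = (\<lambda>y. (1 / real n) *\<^sub>R (\<Sum>a<n. g a y))"
  define u where "u = worker_u g B x xt"
  define W where "W = (\<lambda>I. (1 / real N) *\<^sub>R (\<Sum>i<N. u I i) - (1 / real n) *\<^sub>R (\<Sum>a<n. g a x - g a xt))"
  define Q where "Q = (\<lambda>I. Pi_pmf {..<N} 0 (\<lambda>i. quant_vec (worker_delta lam b (u I i)) b (u I i)))"
  have c: "c \<ge> 0" using dlam_nonneg by (simp add: c_def)
  have fin_idx: "finite (set_pmf (idx_pmf n N B))" using n by (rule finite_set_pmf_idx_pmf)
  have fin_Q: "finite (set_pmf (Q I))" for I
    unfolding Q_def by (intro finite_set_pmf_Pi_pmf finite_set_pmf_quant_vec) auto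
  have "v_pmf g n N B b lam x xt
      = bind_pmf (idx_pmf n N B) (\<lambda>I. map_pmf (\<lambda>q. (1 / real N) *\<^sub>R (\<Sum>i<N. q i) + gradF xt) (Q I))"
    by (simp add: v_pmf_def Q_def u_def gradF_def)
  then have "measure_pmf.expectation (v_pmf g n N B b lam x xt) (\<lambda>v. (norm (v - gradF x))\<^sup>2)
      = measure_pmf.expectation (idx_pmf n N B)
          (\<lambda>I. measure_pmf.expectation (Q I) (\<lambda>q. (norm ((1 / real N) *\<^sub>R (\<Sum>i<N. q i - u I i) + W I))\<^sup>2))"
    using fin_idx fin_Q
    by (simp add: expectation_bind_pmf_finite W_def gradF_def sum_subtractf scaleR_diff_right algebra_simps)
  also have "\<dots> \<le> measure_pmf.expectation (idx_pmf n N B)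
          (\<lambda>I. 2 * c * ((1 / real N) * (\<Sum>i<N. (norm (u I i))\<^sup>2)) + 2 * (norm (W I))\<^sup>2)"
  proof (intro expectation_mono_finite fin_idx)
    fix I assume I: "I \<in> set_pmf (idx_pmf n N B)"
    let ?q = "\<lambda>i. quant_vec (worker_delta lam b (u I i)) b (u I i)"
    have "(\<Sum>i<N. measure_pmf.expectation (?q i) (\<lambda>y. (norm (y - u I i))\<^sup>2)) \<le> (\<Sum>i<N. c * (norm (u I i))\<^sup>2)"
      using quant_vec_error_le[OF lam b dlam_nonneg dlam[OF I, folded u_def]]
      by (intro sum_mono) (simp add: c_def)
    then show "measure_pmf.expectation (Q I) (\<lambda>q. (norm ((1 / real N) *\<^sub>R (\<Sum>i<N. q i - u I i) + W I))\<^sup>2)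
        \<le> 2 * c * ((1 / real N) * (\<Sum>i<N. (norm (u I i))\<^sup>2)) + 2 * (norm (W I))\<^sup>2"
      using expectation_norm_power2_perturbed_mean_le[where A = "{..<N}" and P = ?q and d = 0
          and u = "u I" and w = "W I"] N
      by (simp add: Q_def finite_set_pmf_quant_vec sum_distrib_left[symmetric] field_simps)
  qed
  also have "\<dots> = 2 * c * ((1 / real N) * (\<Sum>i<N. measure_pmf.expectation (idx_pmf n N B) (\<lambda>I. (norm (u I i))\<^sup>2)))
                 + 2 * measure_pmf.expectation (idx_pmf n N B) (\<lambda>I. (norm (W I))\<^sup>2)"
    by (simp add: Bochner_Integration.integral_sum integrable_measure_pmf_finite[OF fin_idx] sum_distrib_left)
  also have "\<dots> \<le> 2 * c * ((1 / real N) * (\<Sum>i<N. S)) + 2 * (S / (real N * real B))"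
    using worker_u_mean_sq_le[OF n] worker_average_deviation_le[OF n N B] c N
    by (intro add_mono mult_left_mono sum_mono) (auto simp: S_def u_def W_def)
  also have "\<dots> = 2 * (c + 1 / (real N * real B)) * S" using N by (simp add: field_simps)
  finally show ?thesis by (simp add: c_def S_def gradF_def)
qed

lemma vhat_pair_mean_sq_error_le:
  fixes g :: "nat \<Rightarrow> real^'d \<Rightarrow> real^'d"
  assumes n: "n \<ge> 1" and B: "B \<ge> 1" and V: "finite (set_pmf V)"
  shows "measure_pmf.expectation (pair_pmf V (batch_pmf n B)) (\<lambda>(v, J). (norm (vhat g n B x xt J - v))\<^sup>2)
       \<le> (1 / real n) * (\<Sum>a<n. (norm (g a x - g a xt))\<^sup>2) / real B
         + measure_pmf.expectation V (\<lambda>v. (norm (v - (1 / real n) *\<^sub>R (\<Sum>a<n. g a x)))\<^sup>2)"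
proof -
  define \<Delta> where "\<Delta> = (\<lambda>a. g a x - g a xt)"
  define S where "S = (1 / real n) * (\<Sum>a<n. (norm (\<Delta> a))\<^sup>2)"
  define gradF where "gradF = (\<lambda>y. (1 / real n) *\<^sub>R (\<Sum>a<n. g a y))"
  define mean where "mean = (\<lambda>J. (1 / real (card {..<B})) *\<^sub>R (\<Sum>a\<in>{..<B}. \<Delta> (J a)))"
  let ?U = "pmf_of_set {..<n}" and ?J = "batch_pmf n B"
  have U: "finite (set_pmf ?U)" using n by (simp add: set_pmf_of_set_lessThan)
  have batch: "finite {..<B}" "{..<B} \<noteq> {}" using B by (auto simp: lessThan_empty_iff)
  have J: "?J = Pi_pmf {..<B} 0 (\<lambda>_. ?U)" by (simp add: batch_pmf_def)
  have fin_J: "finite (set_pmf ?J)" unfolding J using U by (intro finite_set_pmf_Pi_pmf) auto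
  have mean_U: "measure_pmf.expectation ?U \<Delta> = gradF x - gradF xt"
    using n by (simp add: expectation_pmf_of_set_lessThan \<Delta>_def gradF_def sum_subtractf scaleR_diff_right)
  have vhat_eq: "vhat g n B x xt J = mean J + gradF xt" for J
    by (simp add: vhat_def mean_def gradF_def \<Delta>_def)
  have "measure_pmf.expectation ?J (vhat g n B x xt) = measure_pmf.expectation ?J mean + gradF xt"
    unfolding vhat_eq using fin_J by (simp add: integrable_measure_pmf_finite)
  also have "measure_pmf.expectation ?J mean = gradF x - gradF xt"
    by (simp only: J mean_def expectation_sample_mean_Pi_pmf[OF batch U] mean_U)
  finally have unbiased: "measure_pmf.expectation ?J (vhat g n B x xt) = gradF x" by simp
  have variance: "measure_pmf.expectation ?J (\<lambda>J. (norm (vhat g n B x xt J - gradF x))\<^sup>2) \<le> S / real B"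
    using expectation_sample_mean_deviation_le[OF batch U, where h = \<Delta> and d = 0] n
    by (simp add: J vhat_eq mean_def mean_U expectation_pmf_of_set_lessThan S_def algebra_simps)
  have "measure_pmf.expectation ?J (\<lambda>J. (norm (vhat g n B x xt J - v))\<^sup>2) \<le> S / real B + (norm (v - gradF x))\<^sup>2"
    for v
    using expectation_norm_power2_diff[OF fin_J, of "vhat g n B x xt" v] variance
    by (simp add: unbiased norm_minus_commute)
  then have "measure_pmf.expectation (pair_pmf V ?J) (\<lambda>(v, J). (norm (vhat g n B x xt J - v))\<^sup>2)
      \<le> measure_pmf.expectation V (\<lambda>v. S / real B + (norm (v - gradF x))\<^sup>2)"
    using V fin_J by (simp add: expectation_pair_pmf_finite expectation_mono_finite)
  also have "\<dots> = S / real B + measure_pmf.expectation V (\<lambda>v. (norm (v - gradF x))\<^sup>2)"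
    using V by (simp add: integrable_measure_pmf_finite)
  finally show ?thesis by (simp add: S_def \<Delta>_def gradF_def)
qed

lemma mean_sq_grad_diff_le_bregman:
  fixes f :: "nat \<Rightarrow> 'v::real_inner \<Rightarrow> real"
  assumes convex: "\<And>a. a < n \<Longrightarrow> convex_on UNIV (f a)"
    and grad: "\<And>a y. a < n \<Longrightarrow> (f a has_derivative (\<lambda>h. g a y \<bullet> h)) (at y)"
    and lip: "\<And>a y z. a < n \<Longrightarrow> norm (g a y - g a z) \<le> L * norm (y - z)"
  shows "(1 / real n) * (\<Sum>a<n. (norm (g a x - g a xt))\<^sup>2)
       \<le> 2 * L * ((1 / real n) * (\<Sum>a<n. f a xt) - (1 / real n) * (\<Sum>a<n. f a x)
                  - ((1 / real n) *\<^sub>R (\<Sum>a<n. g a x)) \<bullet> (xt - x))"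
proof -
  have "(1 / real n) * (\<Sum>a<n. f a xt) - (1 / real n) * (\<Sum>a<n. f a x)
          - ((1 / real n) *\<^sub>R (\<Sum>a<n. g a x)) \<bullet> (xt - x)
      = (1 / real n) * (\<Sum>a<n. f a xt - f a x - g a x \<bullet> (xt - x))"
    by (simp add: sum_subtractf inner_sum_left right_diff_distrib)
  moreover have "(\<Sum>a<n. (norm (g a x - g a xt))\<^sup>2) \<le> (\<Sum>a<n. 2 * L * (f a xt - f a x - g a x \<bullet> (xt - x)))"
    using lipschitz_gradient_cocoercive[OF convex grad lip] by (intro sum_mono) auto
  ultimately show ?thesis
    by (simp add: sum_distrib_left[symmetric] divide_right_mono)
qed

lemma finite_set_pmf_v_pmf: "n \<ge> 1 \<Longrightarrow> finite (set_pmf (v_pmf g n N B b lam x xt))"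
  unfolding v_pmf_def
  by (simp add: finite_set_pmf_idx_pmf finite_set_pmf_Pi_pmf finite_set_pmf_quant_vec)

theorem mainTheorem7:
  fixes f :: "nat \<Rightarrow> real^'d \<Rightarrow> real"
    and g :: "nat \<Rightarrow> real^'d \<Rightarrow> real^'d"
    and n N B b :: nat and L lam dlam :: real and x xt :: "real^'d"
  assumes n_pos: "n \<ge> 1"
    and convex: "\<And>a. a < n \<Longrightarrow> convex_on UNIV (f a)"
    and grad: "\<And>a y. a < n \<Longrightarrow> (f a has_derivative (\<lambda>h. g a y \<bullet> h)) (at y)"
    and lip: "\<And>a y z. a < n \<Longrightarrow> norm (g a y - g a z) \<le> L * norm (y - z)"
    and N_pos: "N \<ge> 1" and B_pos: "B \<ge> 1" and b_ge: "b \<ge> 2"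
    and lam: "0 < lam" "lam \<le> 1"
    and dlam_nonneg: "dlam \<ge> 0"
    and dlam: "\<And>I i. I \<in> set_pmf (idx_pmf n N B) \<Longrightarrow> i < N \<Longrightarrow>
        real (card {j. worker_u g B x xt I i $ j
                         < - (2 ^ (b - 1)) * worker_delta lam b (worker_u g B x xt I i)
                     \<or> worker_u g B x xt I i $ j
                         > (2 ^ (b - 1) - 1) * worker_delta lam b (worker_u g B x xt I i)}) \<le> dlam"
  defines "F \<equiv> (\<lambda>y. (1 / real n) * (\<Sum>a<n. f a y))"
    and "gradF \<equiv> (\<lambda>y. (1 / real n) *\<^sub>R (\<Sum>a<n. g a y))"
    and "\<zeta> \<equiv> real CARD('d) * lam\<^sup>2 / (4 * (2 ^ (b - 1) - 1)\<^sup>2) + dlam * (1 - lam)\<^sup>2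
              + 1 / (real N * real B)"
  shows "measure_pmf.expectation (v_pmf g n N B b lam x xt) (\<lambda>v. (norm (v - gradF x))\<^sup>2)
           \<le> 4 * L * \<zeta> * (F xt - F x - gradF x \<bullet> (xt - x))
       \<and> measure_pmf.expectation (pair_pmf (v_pmf g n N B b lam x xt) (batch_pmf n B))
           (\<lambda>(v, J). (norm (vhat g n B x xt J - v))\<^sup>2)
           \<le> 4 * L * (1 / (2 * real B) + real CARD('d) * lam\<^sup>2 / (4 * (2 ^ (b - 1) - 1)\<^sup>2)
                     + dlam * (1 - lam)\<^sup>2 + 1 / (real N * real B))
             * (F xt - F x - gradF x \<bullet> (xt - x))"
proof -
  define S where "S = (1 / real n) * (\<Sum>a<n. (norm (g a x - g a xt))\<^sup>2)"
  define D where "D = F xt - F x - gradF x \<bullet> (xt - x)"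
  have SD: "S \<le> 2 * L * D"
    using mean_sq_grad_diff_le_bregman[OF convex grad lip] by (simp add: S_def D_def F_def gradF_def)
  have \<zeta>: "\<zeta> \<ge> 0" using dlam_nonneg by (simp add: \<zeta>_def)
  have v: "measure_pmf.expectation (v_pmf g n N B b lam x xt) (\<lambda>v. (norm (v - gradF x))\<^sup>2) \<le> 2 * \<zeta> * S"
    using v_pmf_mean_sq_error_le[OF n_pos N_pos B_pos b_ge lam dlam_nonneg dlam]
    by (simp add: \<zeta>_def S_def gradF_def)
  have vhat: "measure_pmf.expectation (pair_pmf (v_pmf g n N B b lam x xt) (batch_pmf n B))
        (\<lambda>(v, J). (norm (vhat g n B x xt J - v))\<^sup>2)
      \<le> S / real B + measure_pmf.expectation (v_pmf g n N B b lam x xt) (\<lambda>v. (norm (v - gradF x))\<^sup>2)"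
    using vhat_pair_mean_sq_error_le[OF n_pos B_pos finite_set_pmf_v_pmf[OF n_pos]]
    by (simp add: S_def gradF_def)
  have "2 * \<zeta> * S \<le> 4 * L * \<zeta> * D" using mult_left_mono[OF SD, of "2 * \<zeta>"] \<zeta> by simp
  moreover have "S / real B \<le> 4 * L * (1 / (2 * real B)) * D" using SD B_pos by (simp add: divide_right_mono)
  ultimately show ?thesis
    using v vhat unfolding D_def[symmetric] \<zeta>_def by (simp add: algebra_simps)
qed

end
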